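(* Let $d\ge1$, $L>0$, $\alpha\in(0,1]$, $\mu\in(0,1]$, $R_\mu>0$. There exists a constant $M_{d,L,R_\mu}$ depending only on $d$, $L$ and $R_\mu$ such that every $f\in S_d(L,\alpha,\mu,R_\mu)$ satisfies $\|f\|_\infty\le M_{d,L,R_\mu}$.
   Context: Class $S_d(L,\alpha,\mu,R_\mu)$: the probability densities $f:[0,1]^d\to\mathbb{R}$ such that (A1) there exist open sets $M_1,\dots,M_l\subset[0,1]^d$ with $\bigcup_i\overline{M_i}=[0,1]^d$ and $|f(x)-f(y)|\le L\|x-y\|_2^\alpha$ for all $x,y\in M_i$, for each $i$; (A2) for every $x_0\in[0,1]^d$, $\limsup_{x\to x_0,\,x\in\bigcup_i M_i}f(x)=f(x_0)$; (A3) $\operatorname{reach}_\mu\left(\bigcup_{i=1}^l\partial M_i\right)\ge R_\mu$. $\mu$-reach: for compact $K\subset[0,1]^d$, $d_K(x)=\min_{y\in K}\|x-y\|_2$; for $x\notin K$, $\Gamma_K(x)=\{y\in K:\|x-y\|_2=d_K(x)\}$, $\Theta_K(x)$ is the center of the smallest ball enclosing $\Gamma_K(x)$, $\nabla_K(x)=(x-\Theta_K(x))/d_K(x)$, and $\operatorname{reach}_\mu(K)=\inf\{r:\inf_{d_K^{-1}(r)}\|\nabla_K\|_2<\mu\}$. *)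

theory Defs
  imports "HOL-Analysis.Analysis"
begin

text \<open>The unit cube [0,1]^d, with d = CARD('n).\<close>
definition unit_cube :: "(real^'n) set" where
  "unit_cube = {x. \<forall>i. 0 \<le> x $ i \<and> x $ i \<le> 1}"

definition nearest_set :: "(real^'n) set \<Rightarrow> real^'n \<Rightarrow> (real^'n) set" where
  "nearest_set K x = {y \<in> K. dist x y = infdist x K}"

definition encl_radius :: "(real^'n) set \<Rightarrow> real^'n \<Rightarrow> real" where
  "encl_radius S c = (SUP y\<in>S. dist c y)"

definition seb_center :: "(real^'n) set \<Rightarrow> real^'n" where
  "seb_center S = (THE c. \<forall>c'. encl_radius S c \<le> encl_radius S c')"

definition Theta_K :: "(real^'n) set \<Rightarrow> real^'n \<Rightarrow> real^'n" where
  "Theta_K K x = seb_center (nearest_set K x)"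

definition grad_K :: "(real^'n) set \<Rightarrow> real^'n \<Rightarrow> real^'n" where
  "grad_K K x = (1 / infdist x K) *\<^sub>R (x - Theta_K K x)"

text \<open>mu-reach: inf { r > 0 : inf over the level set d_K^{-1}(r) of |nabla_K| < mu },
  valued in the extended reals (infimum of the empty set = +infinity).\<close>
definition mu_reach :: "real \<Rightarrow> (real^'n) set \<Rightarrow> ereal" where
  "mu_reach \<mu> K = Inf {ereal r | r. r > 0 \<and>
      (INF x\<in>{x. infdist x K = r}. norm (grad_K K x)) < \<mu>}"

definition S_class :: "real \<Rightarrow> real \<Rightarrow> real \<Rightarrow> real \<Rightarrow> (real^'n \<Rightarrow> real) set" where
  "S_class L \<alpha> \<mu> R = {f.
     \<comment> \<open>probability density on the unit cube\<close>
     (\<forall>x\<in>unit_cube. 0 \<le> f x) \<and> (f has_integral 1) unit_cube \<and>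
     (\<exists>Ms :: (real^'n) set set. finite Ms \<and>
        (\<forall>M\<in>Ms. open M \<and> M \<subseteq> unit_cube) \<and>
        \<Union>(closure ` Ms) = unit_cube \<and>
        \<comment> \<open>(A1)\<close>
        (\<forall>M\<in>Ms. \<forall>x\<in>M. \<forall>y\<in>M. \<bar>f x - f y\<bar> \<le> L * norm (x - y) powr \<alpha>) \<and>
        \<comment> \<open>(A2)\<close>
        (\<forall>x0\<in>unit_cube. Limsup (at x0 within \<Union>Ms) (\<lambda>x. ereal (f x)) = ereal (f x0)) \<and>
        \<comment> \<open>(A3)\<close>
        mu_reach \<mu> (\<Union>(frontier ` Ms)) \<ge> ereal R)}"

end

theory Submission
  imports Defs
begin

text \<open>On each piece M the distance to the union K of all piece boundaries attains its maximum
  at an interior point x. The nearest points of K then surround x, for otherwise moving x away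
  from all of them would increase the distance; so the smallest ball enclosing them is centred
  at x and the generalised gradient vanishes there. The \<mu>-reach assumption therefore forces
  d_K(x) \<ge> R, i.e. every piece contains a ball of radius R. Since the cube has diameter at most
  d, the H\<ouml>lder condition keeps f above f(x) - L(1 + d) on that ball, and total mass 1 bounds
  f(x) by L(1 + d) + 1 / vol(ball of radius R). Condition (A2) extends the bound to the boundary
  points.\<close>

lemma inner_ge_half_norm_sq_if_dist_le:
  fixes x y c :: "'a::real_inner"
  assumes "dist c y \<le> dist x y"
  shows "norm (c - x)^2 / 2 \<le> (y - x) \<bullet> (c - x)"
proof -
  have "norm ((x - y) + (c - x))^2 \<le> norm (x - y)^2"
    using assms by (simp add: dist_norm power_mono)
  then show ?thesis
    by (simp add: power2_norm_eq_inner algebra_simps inner_commute)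
      (simp add: field_simps)
qed

lemma infdist_increases_away_from_nearest:
  fixes K :: "'a::euclidean_space set"
  assumes K: "compact K" "K \<noteq> {}" and "e > 0"
    and away: "\<And>y. y \<in> K \<Longrightarrow> dist x y = infdist x K \<Longrightarrow> 0 < (y - x) \<bullet> v"
  shows "\<exists>z. dist x z < e \<and> infdist x K < infdist z K"
proof -
  define r where "r = infdist x K"
  have clK: "closed K" using K(1) by (rule compact_imp_closed)
  obtain y0 where "y0 \<in> K" "infdist x K = dist x y0"
    using infdist_attains_inf[OF clK K(2)] by blast
  then have "norm v > 0" using away by fastforce
  \<comment> \<open>h is positive on K: points of K are either strictly farther than r from x or lie
    strictly on the positive side of v; compactness makes this uniform.\<close>
  define h where "h z = max (dist x z - r) ((z - x) \<bullet> v)" for z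
  have h_pos: "h z > 0" if "z \<in> K" for z
    using away[OF that] infdist_le[OF that, of x] unfolding h_def r_def by fastforce
  have "continuous_on K h" unfolding h_def by (intro continuous_intros)
  then obtain z0 where z0: "z0 \<in> K" "\<And>z. z \<in> K \<Longrightarrow> h z0 \<le> h z"
    using continuous_attains_inf[OF K] by blast
  define \<eta> where "\<eta> = h z0"
  have "\<eta> > 0" using h_pos z0(1) unfolding \<eta>_def by blast
  define t where "t = min e \<eta> / (2 * norm v)"
  define xt where "xt = x - t *\<^sub>R v"
  have "t > 0" using \<open>e > 0\<close> \<open>\<eta> > 0\<close> \<open>norm v > 0\<close> unfolding t_def by simp
  have dist_xt: "dist x xt = min e \<eta> / 2"
    unfolding xt_def t_def dist_norm using \<open>norm v > 0\<close> \<open>e > 0\<close> \<open>\<eta> > 0\<close> by simp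
  have farther: "r < dist xt z" if z: "z \<in> K" for z
  proof (cases "\<eta> \<le> dist x z - r")
    case True
    then show ?thesis using dist_triangle[of x z xt] dist_xt \<open>\<eta> > 0\<close> by linarith
  next
    case False
    then have "\<eta> \<le> (z - x) \<bullet> v" using z0(2)[OF z] unfolding \<eta>_def h_def by auto
    then have "0 < 2 * t * ((z - x) \<bullet> v)" using \<open>t > 0\<close> \<open>\<eta> > 0\<close> by simp
    moreover have "norm (xt - z)^2 = norm (x - z)^2 + 2 * t * ((z - x) \<bullet> v) + t^2 * norm v^2"
      unfolding xt_def power2_norm_eq_inner
      by (simp add: algebra_simps inner_commute power2_eq_square)
    moreover have "r^2 \<le> norm (x - z)^2"
      using infdist_le[OF z, of x] infdist_nonneg[of x K] unfolding r_def
      by (simp add: dist_norm power_mono)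
    moreover have "0 \<le> t^2 * norm v^2" by simp
    ultimately have "r^2 < norm (xt - z)^2" by linarith
    then show ?thesis unfolding dist_norm using infdist_nonneg[of x K] r_def
      by (simp add: power_less_imp_less_base)
  qed
  obtain z where "z \<in> K" "infdist xt K = dist xt z"
    using infdist_attains_inf[OF clK K(2)] by blast
  then have "r < infdist xt K" using farther by simp
  moreover have "dist x xt < e" using dist_xt \<open>e > 0\<close> \<open>\<eta> > 0\<close> by simp
  ultimately show ?thesis unfolding r_def by blast
qed

lemma nearest_set_surrounds_local_max:
  fixes K :: "(real^'n) set"
  assumes K: "compact K" "K \<noteq> {}" and "e > 0"
    and local_max: "\<And>z. dist x z < e \<Longrightarrow> infdist z K \<le> infdist x K"
    and "c \<noteq> x"
  shows "\<exists>y\<in>nearest_set K x. infdist x K < dist c y"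
proof (rule ccontr)
  assume "\<not> ?thesis"
  then have dist_le: "dist c y \<le> dist x y" if "y \<in> K" "dist x y = infdist x K" for y
    using that by (auto simp: nearest_set_def not_less)
  have "0 < norm (c - x)^2 / 2" using \<open>c \<noteq> x\<close> by simp
  then have "0 < (y - x) \<bullet> (c - x)" if "y \<in> K" "dist x y = infdist x K" for y
    using inner_ge_half_norm_sq_if_dist_le[OF dist_le[OF that]] by linarith
  then obtain z where "dist x z < e" "infdist x K < infdist z K"
    using infdist_increases_away_from_nearest[OF K \<open>e > 0\<close>] by blast
  then show False using local_max by force
qed

lemma seb_center_eqI:
  assumes "G \<noteq> {}" and on_sphere: "\<And>y. y \<in> G \<Longrightarrow> dist x y = r"
    and far: "\<And>c. c \<noteq> x \<Longrightarrow> \<exists>y\<in>G. r < dist c y"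
  shows "seb_center G = x"
proof -
  have radius_x: "encl_radius G x = r"
    unfolding encl_radius_def using assms(1) on_sphere by simp
  have "r < encl_radius G c" if c: "c \<noteq> x" for c
  proof -
    obtain y where "y \<in> G" "r < dist c y" using far[OF c] by blast
    moreover have "bdd_above (dist c ` G)"
      using dist_triangle[of c _ x] on_sphere by (intro bdd_aboveI2[of _ _ "dist c x + r"]) auto
    ultimately show ?thesis unfolding encl_radius_def by (meson cSUP_upper less_le_trans)
  qed
  then show ?thesis
    unfolding seb_center_def using radius_x
    by (intro the_equality) (metis order.refl less_imp_le, metis not_less)
qed

lemma grad_K_eq_0_at_local_max:
  fixes K :: "(real^'n) set"
  assumes "compact K" "K \<noteq> {}" "e > 0"
    and "\<And>z. dist x z < e \<Longrightarrow> infdist z K \<le> infdist x K"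
  shows "grad_K K x = 0"
proof -
  have "seb_center (nearest_set K x) = x"
  proof (rule seb_center_eqI)
    obtain y where "y \<in> K" "infdist x K = dist x y"
      using infdist_attains_inf[OF compact_imp_closed[OF assms(1)] assms(2)] by blast
    then show "nearest_set K x \<noteq> {}" by (auto simp: nearest_set_def)
  next
    show "\<exists>y\<in>nearest_set K x. infdist x K < dist c y" if "c \<noteq> x" for c
      using nearest_set_surrounds_local_max[OF assms that] .
  qed (simp add: nearest_set_def)
  then show ?thesis by (simp add: grad_K_def Theta_K_def)
qed

lemma mu_reach_le_infdist_if_grad_K_eq_0:
  assumes "grad_K K x = 0" "0 < \<mu>" "0 < infdist x K"
  shows "mu_reach \<mu> K \<le> ereal (infdist x K)"
proof -
  have "(INF z\<in>{z. infdist z K = infdist x K}. norm (grad_K K z)) \<le> norm (grad_K K x)"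
    by (rule cINF_lower) (auto intro: bdd_belowI2[where m = 0])
  then have "(INF z\<in>{z. infdist z K = infdist x K}. norm (grad_K K z)) < \<mu>"
    using assms(1,2) by simp
  then show ?thesis
    unfolding mu_reach_def using assms(3) by (intro Inf_lower) blast
qed

lemma interior_frontier_open:
  assumes "open M"
  shows "interior (frontier M) = {}"
proof -
  have "interior (frontier M) \<inter> M = {}"
    using interior_subset[of "frontier M"] assms by (auto simp: frontier_def interior_open)
  then have "interior (frontier M) \<inter> closure M = {}"
    by (simp add: open_Int_closure_eq_empty)
  moreover have "interior (frontier M) \<subseteq> closure M"
    using interior_subset[of "frontier M"] by (auto simp: frontier_def)
  ultimately show ?thesis by blast
qed

lemma interior_Union_closed_empty_interior:
  assumes "finite F" "\<And>S. S \<in> F \<Longrightarrow> closed S \<and> interior S = {}"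
  shows "interior (\<Union>F) = {}"
  using assms
proof (induction F rule: finite_induct)
  case (insert S F)
  then have "interior (S \<union> \<Union>F) = interior S"
    by (intro interior_closed_Un_empty_interior) auto
  then show ?case using insert by simp
qed simp

lemma compact_Union_frontier:
  fixes Ms :: "'a::heine_borel set set"
  assumes "finite Ms" "\<And>M. M \<in> Ms \<Longrightarrow> bounded M"
  shows "compact (\<Union>(frontier ` Ms))"
proof (rule compact_Union)
  fix T assume "T \<in> frontier ` Ms"
  then show "compact T"
    using assms(2) bounded_subset[OF bounded_closure, of _ "frontier _"]
    by (auto simp: compact_eq_bounded_closed frontier_def)
qed (use assms(1) in simp)

lemma infdist_attains_local_max_in_open:
  fixes M K :: "'a::euclidean_space set"
  assumes M: "open M" "bounded M" and K: "closed K" "frontier M \<subseteq> K" "\<not> M \<subseteq> K"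
  obtains x e where "x \<in> M" "0 < infdist x K" "e > 0"
    "\<And>z. dist x z < e \<Longrightarrow> infdist z K \<le> infdist x K"
proof -
  obtain p where p: "p \<in> M" "p \<notin> K" using K(3) by blast
  have "frontier M \<noteq> {}"
    using p(1) M(2) frontier_eq_empty[of M] not_bounded_UNIV by force
  then have "K \<noteq> {}" using K(2) by blast
  have "continuous_on (closure M) (\<lambda>z. infdist z K)" by (intro continuous_intros)
  then obtain x where x: "x \<in> closure M" "\<And>z. z \<in> closure M \<Longrightarrow> infdist z K \<le> infdist x K"
    using continuous_attains_sup[of "closure M"] M(2) p(1) compact_closure by blast
  have "0 < infdist x K"
    using infdist_pos_not_in_closed[OF K(1) \<open>K \<noteq> {}\<close> p(2)] x(2)[of p] p(1) closure_subset
    by force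
  have "x \<in> M"
  proof (rule ccontr)
    assume "x \<notin> M"
    then have "x \<in> K" using x(1) K(2) M(1) by (auto simp: frontier_def interior_open)
    then show False using \<open>0 < infdist x K\<close> by simp
  qed
  obtain e where "e > 0" "ball x e \<subseteq> M" using M(1) \<open>x \<in> M\<close> open_contains_ball by blast
  then have "infdist z K \<le> infdist x K" if "dist x z < e" for z
    using x(2) closure_subset that by (meson mem_ball subsetD)
  then show thesis using that \<open>x \<in> M\<close> \<open>0 < infdist x K\<close> \<open>e > 0\<close> by blast
qed

lemma ball_subset_if_frontier_subset:
  fixes M :: "'a::real_normed_vector set"
  assumes "x \<in> M" "frontier M \<subseteq> K" "r \<le> infdist x K"
  shows "ball x r \<subseteq> M"
proof (rule ccontr)
  assume "\<not> ball x r \<subseteq> M"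
  then obtain y where "y \<in> ball x r" by blast
  then have "x \<in> ball x r" using le_less_trans[OF zero_le_dist[of x y]] by simp
  then have "ball x r \<inter> frontier M \<noteq> {}"
    using connected_Int_frontier[of "ball x r" M] \<open>\<not> ball x r \<subseteq> M\<close> assms(1) by blast
  then obtain z where "z \<in> ball x r" "z \<in> K" using assms(2) by blast
  then show False using infdist_le[of z K x] assms(3) by simp
qed

lemma ball_subset_piece_if_mu_reach_ge:
  fixes Ms :: "(real^'n) set set"
  assumes Ms: "finite Ms" "\<And>M. M \<in> Ms \<Longrightarrow> open M \<and> bounded M"
    and reach: "ereal R \<le> mu_reach \<mu> (\<Union>(frontier ` Ms))" and "0 < \<mu>"
    and M: "M \<in> Ms" "M \<noteq> {}"
  obtains c where "ball c R \<subseteq> M"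
proof -
  define K where "K = \<Union>(frontier ` Ms)"
  have "compact K" unfolding K_def using Ms by (intro compact_Union_frontier) auto
  have "interior K = {}" unfolding K_def
    using Ms by (intro interior_Union_closed_empty_interior) (auto simp: interior_frontier_open)
  then have "\<not> M \<subseteq> K" using interior_maximal[of M K] Ms(2) M by auto
  moreover have "frontier M \<subseteq> K" unfolding K_def using M(1) by blast
  ultimately obtain x e where x: "x \<in> M" "0 < infdist x K" "e > 0"
    "\<And>z. dist x z < e \<Longrightarrow> infdist z K \<le> infdist x K"
    using infdist_attains_local_max_in_open[of M K] Ms(2) M(1) compact_imp_closed \<open>compact K\<close>
    by metis
  have "K \<noteq> {}" using x(2) by (auto simp: infdist_def)
  have "grad_K K x = 0" using grad_K_eq_0_at_local_max[OF \<open>compact K\<close> \<open>K \<noteq> {}\<close> x(3,4)] .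
  then have "mu_reach \<mu> K \<le> ereal (infdist x K)"
    using mu_reach_le_infdist_if_grad_K_eq_0 \<open>0 < \<mu>\<close> x(2) by blast
  then have "R \<le> infdist x K" using reach unfolding K_def by (metis ereal_less_eq(3) order_trans)
  then show thesis
    using that ball_subset_if_frontier_subset[OF x(1) \<open>frontier M \<subseteq> K\<close>] by blast
qed

lemma unit_cube_dist_le:
  fixes x y :: "real^'n"
  assumes "x \<in> unit_cube" "y \<in> unit_cube"
  shows "dist x y \<le> real CARD('n)"
proof -
  have "dist x y \<le> (\<Sum>i\<in>UNIV. \<bar>(x - y) $ i\<bar>)" unfolding dist_norm by (rule norm_le_l1_cart)
  also have "\<dots> \<le> (\<Sum>i\<in>(UNIV::'n set). 1)"
  proof (rule sum_mono)
    fix i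
    have "0 \<le> x $ i" "x $ i \<le> 1" "0 \<le> y $ i" "y $ i \<le> 1"
      using assms unfolding unit_cube_def by auto
    then show "\<bar>(x - y) $ i\<bar> \<le> 1" by (simp add: abs_le_iff)
  qed
  finally show ?thesis by simp
qed

lemma bounded_unit_cube: "bounded unit_cube"
  unfolding bounded_def using unit_cube_dist_le by blast

lemma powr_le_1_plus:
  fixes t a :: real
  assumes "0 \<le> t" "0 < a" "a \<le> 1"
  shows "t powr a \<le> 1 + t"
proof (cases "t \<le> 1")
  case True
  then have "t powr a \<le> 1" using assms by (intro powr_le1) auto
  then show ?thesis using assms by linarith
next
  case False
  then have "t powr a \<le> t powr 1" using assms by (intro powr_mono) auto
  then show ?thesis using False by simp
qed

lemma const_mul_measure_ball_le_integral:
  fixes f :: "'a::euclidean_space \<Rightarrow> real"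
  assumes f: "(f has_integral I) S" "\<And>x. x \<in> S \<Longrightarrow> 0 \<le> f x"
    and ball: "ball c r \<subseteq> S" "\<And>y. y \<in> ball c r \<Longrightarrow> a \<le> f y"
  shows "a * measure lborel (ball c r) \<le> I"
proof -
  have "((\<lambda>x. 1) has_integral measure lborel (ball c r)) (ball c r)"
    by (rule has_integral_measure_lborel)
      (auto intro: emeasure_lborel_ball_finite[unfolded infinity_ennreal_def])
  from has_integral_mult_right[OF this, of a]
  have "((\<lambda>_. a) has_integral a * measure lborel (ball c r)) (ball c r)" by simp
  then have "((\<lambda>y. if y \<in> ball c r then a else 0) has_integral a * measure lborel (ball c r)) S"
    by (simp only: has_integral_restrict[OF ball(1)])
  then show ?thesis
    by (rule has_integral_le[OF _ f(1)]) (use f(2) ball(2) in auto)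
qed

lemma density_le_on_Hoelder_piece:
  fixes f :: "real^'n \<Rightarrow> real"
  assumes f: "\<forall>x\<in>unit_cube. 0 \<le> f x" "(f has_integral 1) unit_cube"
    and M: "M \<subseteq> unit_cube" "ball c R \<subseteq> M" "0 < R"
    and hoelder: "\<forall>x\<in>M. \<forall>y\<in>M. \<bar>f x - f y\<bar> \<le> L * norm (x - y) powr \<alpha>"
    and "0 \<le> L" "0 < \<alpha>" "\<alpha> \<le> 1" "x \<in> M"
  shows "f x \<le> L * (1 + real CARD('n)) + 1 / measure lborel (ball (0::real^'n) R)"
proof -
  define C where "C = L * (1 + real CARD('n))"
  define V where "V = measure lborel (ball (0::real^'n) R)"
  have "V > 0" unfolding V_def using M(3) by simp
  have "f x - C \<le> f y" if "y \<in> ball c R" for y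
  proof -
    have "y \<in> M" using that M(2) by blast
    then have "norm (x - y) \<le> real CARD('n)"
      using unit_cube_dist_le M(1) \<open>x \<in> M\<close> by (auto simp: dist_norm)
    then have "norm (x - y) powr \<alpha> \<le> 1 + real CARD('n)"
      using powr_le_1_plus[of "norm (x - y)" \<alpha>] \<open>0 < \<alpha>\<close> \<open>\<alpha> \<le> 1\<close> by simp
    then have "L * norm (x - y) powr \<alpha> \<le> C"
      unfolding C_def using \<open>0 \<le> L\<close> by (rule mult_left_mono)
    then show ?thesis using hoelder \<open>x \<in> M\<close> \<open>y \<in> M\<close> by force
  qed
  moreover have "measure lborel (ball c R) = V"
    unfolding V_def using M(3)
      content_ball_conv_unit_ball[of R c] content_ball_conv_unit_ball[of R "0::real^'n"]
    by simp
  moreover have "ball c R \<subseteq> unit_cube" using M(1,2) by blast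
  ultimately have "(f x - C) * V \<le> 1"
    using const_mul_measure_ball_le_integral[OF f(2), of c R "f x - C"] f(1) by simp
  then have "f x - C \<le> 1 / V" using \<open>V > 0\<close> by (simp add: field_simps)
  then show ?thesis unfolding C_def V_def by simp
qed

lemma S_class_abs_le:
  fixes f :: "real^'n \<Rightarrow> real"
  assumes "f \<in> S_class L \<alpha> \<mu> R" "0 \<le> L" "0 < \<alpha>" "\<alpha> \<le> 1" "0 < \<mu>" "0 < R"
    and "x0 \<in> unit_cube"
  shows "\<bar>f x0\<bar> \<le> L * (1 + real CARD('n)) + 1 / measure lborel (ball (0::real^'n) R)"
    (is "_ \<le> ?B")
proof -
  from \<open>f \<in> S_class L \<alpha> \<mu> R\<close> obtain Ms where
    f: "\<forall>x\<in>unit_cube. 0 \<le> f x" "(f has_integral 1) unit_cube"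
    and Ms: "finite Ms" "\<forall>M\<in>Ms. open M \<and> M \<subseteq> unit_cube"
    and hoelder: "\<forall>M\<in>Ms. \<forall>x\<in>M. \<forall>y\<in>M. \<bar>f x - f y\<bar> \<le> L * norm (x - y) powr \<alpha>"
    and A2: "\<forall>x0\<in>unit_cube. Limsup (at x0 within \<Union>Ms) (\<lambda>x. ereal (f x)) = ereal (f x0)"
    and A3: "ereal R \<le> mu_reach \<mu> (\<Union>(frontier ` Ms))"
    unfolding S_class_def by blast
  have pieces: "open M \<and> bounded M" if "M \<in> Ms" for M
    using Ms(2) that bounded_subset[OF bounded_unit_cube] by blast
  have "f x \<le> ?B" if x: "x \<in> \<Union>Ms" for x
  proof -
    obtain M where M: "M \<in> Ms" "x \<in> M" using x by blast
    obtain c where "ball c R \<subseteq> M"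
      using ball_subset_piece_if_mu_reach_ge[OF Ms(1) pieces A3 \<open>0 < \<mu>\<close> M(1)] M(2) by blast
    moreover have "M \<subseteq> unit_cube" using Ms(2) M(1) by blast
    moreover have "\<forall>x\<in>M. \<forall>y\<in>M. \<bar>f x - f y\<bar> \<le> L * norm (x - y) powr \<alpha>"
      using hoelder M(1) by blast
    ultimately show ?thesis
      using density_le_on_Hoelder_piece[OF f] assms(2-4,6) M(2) by simp
  qed
  then have "Limsup (at x0 within \<Union>Ms) (\<lambda>x. ereal (f x)) \<le> ereal ?B"
    by (intro Limsup_bounded) (auto simp: eventually_at_filter)
  then show ?thesis using A2 f(1) \<open>x0 \<in> unit_cube\<close> by simp
qed

theorem lemma1:
  fixes L R :: real
  assumes "L > 0" and "R > 0"
  shows "\<exists>Mc::real. \<forall>(\<alpha>::real) (\<mu>::real) (f::real^'n \<Rightarrow> real).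
           0 < \<alpha> \<and> \<alpha> \<le> 1 \<and> 0 < \<mu> \<and> \<mu> \<le> 1 \<and> f \<in> S_class L \<alpha> \<mu> R
           \<longrightarrow> (\<forall>x\<in>unit_cube. \<bar>f x\<bar> \<le> Mc)"
  using S_class_abs_le[where 'n = 'n and L = L and R = R] assms
  by (intro exI[of _ "L * (1 + real CARD('n)) + 1 / measure lborel (ball (0::real^'n) R)"])
    (auto simp: less_imp_le)

end
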